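(* There is an absolute constant $C>0$ such that the following holds. Let $\epsilon\in(0,1)$, let $u\in\mathbb{R}^d$, and let $S\subseteq\mathbb{R}^d$ be a finite set of vectors of Euclidean norm at most $1$ with pairwise distinct values $u^Tx$, of intrinsic dimension $d'$. Let $t=\lceil C d'\log(d'/\epsilon)\rceil$ and suppose $|S|\ge 4t$. Then $$|\{x\in S:\ S\setminus\{x\}\vdash x\}|\ge \tfrac34|S|.$$
   Context: For a finite set $T=\{x_1,\dots,x_s\}$ sorted so that $u^Tx_1>\dots>u^Tx_s$, write $T\vdash x$ if $\min_{\alpha_1,\dots,\alpha_{s-1}\ge 0}\big\|x-x_1-\sum_{j=1}^{s-1}\alpha_j(x_{j+1}-x_j)\big\|_2\le\epsilon$. The intrinsic dimension of a set is the smallest number of orthonormal vectors whose span contains the set. *)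

theory Defs
  imports Complex_Main
begin

text \<open>Vectors of R^d are represented as functions nat => real whose coordinates
  outside {..<d} vanish; this lets the dimension d be quantified inside the
  statement (the constant C must not depend on d).\<close>

definition in_Rd :: "nat \<Rightarrow> (nat \<Rightarrow> real) \<Rightarrow> bool" where
  "in_Rd d x \<longleftrightarrow> (\<forall>i\<ge>d. x i = 0)"

definition ip :: "nat \<Rightarrow> (nat \<Rightarrow> real) \<Rightarrow> (nat \<Rightarrow> real) \<Rightarrow> real" where
  "ip d x y = (\<Sum>i<d. x i * y i)"

definition vnorm :: "nat \<Rightarrow> (nat \<Rightarrow> real) \<Rightarrow> real" where
  "vnorm d x = sqrt (ip d x x)"

definition intrinsic_dim :: "nat \<Rightarrow> (nat \<Rightarrow> real) set \<Rightarrow> nat" where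
  "intrinsic_dim d S = (LEAST k. \<exists>b :: nat \<Rightarrow> nat \<Rightarrow> real.
      (\<forall>j<k. in_Rd d (b j)) \<and>
      (\<forall>j<k. \<forall>l<k. ip d (b j) (b l) = (if j = l then 1 else 0)) \<and>
      (\<forall>x\<in>S. \<exists>c :: nat \<Rightarrow> real. \<forall>i. x i = (\<Sum>j<k. c j * b j i)))"

definition sorted_desc :: "nat \<Rightarrow> (nat \<Rightarrow> real) \<Rightarrow> (nat \<Rightarrow> real) set \<Rightarrow> (nat \<Rightarrow> real) list" where
  "sorted_desc d u T = (THE xs. set xs = T \<and> sorted_wrt (\<lambda>a b. ip d u b < ip d u a) xs)"

definition derives :: "nat \<Rightarrow> (nat \<Rightarrow> real) \<Rightarrow> real \<Rightarrow> (nat \<Rightarrow> real) set \<Rightarrow> (nat \<Rightarrow> real) \<Rightarrow> bool" where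
  "derives d u \<epsilon> T x \<longleftrightarrow>
     (let xs = sorted_desc d u T; s = length xs in
      Inf {vnorm d (\<lambda>i. x i - (xs ! 0) i - (\<Sum>j<s - 1. \<alpha> j * ((xs ! (j+1)) i - (xs ! j) i)))
           | \<alpha> :: nat \<Rightarrow> real. \<forall>j<s - 1. 0 \<le> \<alpha> j} \<le> \<epsilon>)"

end

theory Submission
  imports Defs
begin

text \<open>Sort \<open>S\<close> by decreasing \<open>u\<^sup>T x\<close> as \<open>x\<^sub>0, ..., x\<^sub>n\<^sub>-\<^sub>1\<close>, and write the steps
  \<open>v\<^sub>j = x\<^sub>j\<^sub>+\<^sub>1 - x\<^sub>j\<close> in an orthonormal basis of the span of \<open>S\<close>, of dimension \<open>N\<close>.
  If \<open>x\<^sub>k\<close> (\<open>k > 0\<close>) is not derived, then \<open>x\<^sub>k - x\<^sub>0\<close> is \<open>\<epsilon>\<close>-far from the cone spanned by the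
  steps of the remaining points, and the residual of a near-minimiser is a functional that is almost
  nonpositive on the steps \<open>v\<^sub>j\<close>, \<open>j < k - 1\<close>, but large on \<open>x\<^sub>k - x\<^sub>0\<close>. Telescoping shows that
  \<open>v\<^sub>k\<^sub>-\<^sub>1\<close> then has leverage at least \<open>1/2\<close> with respect to
  \<open>W\<^sub>k\<^sub>-\<^sub>1 = \<epsilon>\<^sup>2 I + \<Sum>\<^sub>j v\<^sub>j v\<^sub>j\<^sup>T\<close> (over \<open>j < k - 1\<close>). By the matrix determinant lemma every such step
  multiplies \<open>det W\<close> by at least \<open>3/2\<close>, while Hadamard's inequality gives
  \<open>det W\<^sub>n\<^sub>-\<^sub>1 \<le> (\<epsilon>\<^sup>2 + 4n)\<^sup>N\<close>. Hence there are only \<open>O(N log (n / \<epsilon>))\<close> non-derived points,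
  fewer than \<open>n/4\<close> once \<open>n \<ge> 4000 N log (N / \<epsilon>)\<close>. For \<open>N = 1\<close> all points are collinear and
  every \<open>x\<^sub>k\<close> with \<open>k > 0\<close> lies on the ray from \<open>x\<^sub>0\<close> through the next remaining point.\<close>

section \<open>Determinants of positive definite forms by elimination\<close>

text \<open>Matrices are functions \<open>nat \<Rightarrow> nat \<Rightarrow> real\<close> of which only the leading \<open>N \<times> N\<close> block
  matters, so that the dimension can vary inside a statement. The determinant is the product of
  the pivots of Gaussian elimination, eliminating the last index first.\<close>

definition quad_form :: "nat \<Rightarrow> (nat \<Rightarrow> nat \<Rightarrow> real) \<Rightarrow> (nat \<Rightarrow> real) \<Rightarrow> real" where
  "quad_form N Q x = (\<Sum>a<N. \<Sum>b<N. x a * Q a b * x b)"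

definition pos_def :: "nat \<Rightarrow> (nat \<Rightarrow> nat \<Rightarrow> real) \<Rightarrow> bool" where
  "pos_def N Q \<longleftrightarrow> (\<forall>i<N. \<forall>j<N. Q i j = Q j i) \<and> (\<forall>x. (\<exists>i<N. x i \<noteq> 0) \<longrightarrow> 0 < quad_form N Q x)"

definition schur_compl :: "nat \<Rightarrow> (nat \<Rightarrow> nat \<Rightarrow> real) \<Rightarrow> nat \<Rightarrow> nat \<Rightarrow> real" where
  "schur_compl e Q i j = Q i j - Q i e * Q e j / Q e e"

fun pivot_det :: "nat \<Rightarrow> (nat \<Rightarrow> nat \<Rightarrow> real) \<Rightarrow> real" where
  "pivot_det 0 Q = 1"
| "pivot_det (Suc N) Q = Q N N * pivot_det N (schur_compl N Q)"

lemma pivot_det_cong: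
  "(\<And>i j. i < N \<Longrightarrow> j < N \<Longrightarrow> Q i j = Q' i j) \<Longrightarrow> pivot_det N Q = pivot_det N Q'"
proof (induction N arbitrary: Q Q')
  case (Suc N)
  have "pivot_det N (schur_compl N Q) = pivot_det N (schur_compl N Q')"
    by (rule Suc.IH) (simp add: schur_compl_def Suc.prems)
  then show ?case by (simp add: Suc.prems)
qed simp

lemma quad_form_cong:
  "(\<And>i j. i < N \<Longrightarrow> j < N \<Longrightarrow> Q i j = Q' i j) \<Longrightarrow> (\<And>i. i < N \<Longrightarrow> x i = x' i) \<Longrightarrow>
    quad_form N Q x = quad_form N Q' x'"
  unfolding quad_form_def by (intro sum.cong refl) auto

lemma quad_form_Suc:
  assumes sym: "\<And>i. i < N \<Longrightarrow> Q i N = Q N i" and piv: "Q N N \<noteq> 0"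
  shows "quad_form (Suc N) Q x =
    quad_form N (schur_compl N Q) x + Q N N * (x N + (\<Sum>i<N. Q N i * x i) / Q N N)^2"
proof -
  define s where "s = (\<Sum>i<N. Q N i * x i)"
  define p where "p = Q N N"
  have "quad_form (Suc N) Q x = (\<Sum>a<N. \<Sum>b<N. x a * Q a b * x b) + (\<Sum>a<N. x a * Q a N * x N)
      + (\<Sum>b<N. x N * Q N b * x b) + x N * Q N N * x N"
    unfolding quad_form_def by (simp add: sum.distrib algebra_simps)
  also have "(\<Sum>a<N. x a * Q a N * x N) = x N * s"
    unfolding s_def by (simp add: sum_distrib_left sym algebra_simps)
  also have "(\<Sum>b<N. x N * Q N b * x b) = x N * s"
    unfolding s_def by (simp add: sum_distrib_left algebra_simps)
  also have "(\<Sum>a<N. \<Sum>b<N. x a * Q a b * x b) = quad_form N (schur_compl N Q) x + s^2 / p"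
  proof -
    have "quad_form N (schur_compl N Q) x = (\<Sum>a<N. \<Sum>b<N. x a * Q a b * x b)
        - (\<Sum>a<N. \<Sum>b<N. (x a * Q a N) * (Q N b * x b) / p)"
      unfolding quad_form_def schur_compl_def p_def by (simp add: sum_subtractf algebra_simps)
    also have "(\<Sum>a<N. \<Sum>b<N. (x a * Q a N) * (Q N b * x b) / p) = s^2 / p"
      unfolding s_def power2_eq_square
      by (simp add: sum_divide_distrib[symmetric] sum_product sym algebra_simps)
    finally show ?thesis by simp
  qed
  finally show ?thesis
    using piv unfolding s_def[symmetric] p_def[symmetric] by (simp add: field_simps power2_eq_square)
qed

lemma quad_form_unit:
  assumes "i < N"
  shows "quad_form N Q (\<lambda>j. if j = i then 1 else 0) = Q i i"
proof -
  have "\<And>a b. (if a = i then 1 else 0) * Q a b * (if b = i then 1 else 0) =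
      (if b = i then if a = i then Q a b else 0 else (0::real))"
    by simp
  then show ?thesis unfolding quad_form_def using assms by simp
qed

lemma pos_def_sym: "pos_def N Q \<Longrightarrow> i < N \<Longrightarrow> j < N \<Longrightarrow> Q i j = Q j i"
  unfolding pos_def_def by blast

lemma pos_def_quad_form_pos: "pos_def N Q \<Longrightarrow> i < N \<Longrightarrow> x i \<noteq> 0 \<Longrightarrow> 0 < quad_form N Q x"
  unfolding pos_def_def by blast

lemma pos_def_quad_form_nonneg: "pos_def N Q \<Longrightarrow> 0 \<le> quad_form N Q x"
  by (cases "\<exists>i<N. x i \<noteq> 0") (auto simp: quad_form_def dest: pos_def_quad_form_pos)

lemma pos_def_quad_form_eq_0: "pos_def N Q \<Longrightarrow> quad_form N Q x = 0 \<Longrightarrow> i < N \<Longrightarrow> x i = 0"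
  using pos_def_quad_form_pos[of N Q i x] by auto

lemma pos_def_diag_pos: "pos_def N Q \<Longrightarrow> i < N \<Longrightarrow> 0 < Q i i"
  using pos_def_quad_form_pos[of N Q i "\<lambda>j. if j = i then 1 else 0"] quad_form_unit by simp

lemma pos_def_schur_compl:
  assumes pd: "pos_def (Suc N) Q"
  shows "pos_def N (schur_compl N Q)"
proof -
  have piv: "0 < Q N N" using pos_def_diag_pos[OF pd] by simp
  have sym: "\<And>i. i < N \<Longrightarrow> Q i N = Q N i" using pos_def_sym[OF pd] by simp
  have "schur_compl N Q i j = schur_compl N Q j i" if "i < N" "j < N" for i j
    using that pos_def_sym[OF pd, of i j] sym unfolding schur_compl_def by (simp add: mult.commute)
  moreover have "0 < quad_form N (schur_compl N Q) x" if "i < N" "x i \<noteq> 0" for x i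
  proof -
    define x' where "x' = x(N := - (\<Sum>i<N. Q N i * x i) / Q N N)"
    have "(\<Sum>i<N. Q N i * x' i) = (\<Sum>i<N. Q N i * x i)"
      unfolding x'_def by (intro sum.cong) auto
    then have "quad_form (Suc N) Q x' = quad_form N (schur_compl N Q) x'"
      using quad_form_Suc[of N Q x', OF sym] piv by (simp add: x'_def)
    also have "\<dots> = quad_form N (schur_compl N Q) x"
      by (rule quad_form_cong) (auto simp: x'_def)
    finally show ?thesis
      using pos_def_quad_form_pos[OF pd, of i x'] that by (simp add: x'_def)
  qed
  ultimately show ?thesis unfolding pos_def_def by blast
qed

lemma pivot_det_pos: "pos_def N Q \<Longrightarrow> 0 < pivot_det N Q"
proof (induction N arbitrary: Q)
  case (Suc N)
  then show ?case using pos_def_diag_pos pos_def_schur_compl by simp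
qed simp

lemma pivot_det_le_prod_diag: "pos_def N Q \<Longrightarrow> pivot_det N Q \<le> (\<Prod>i<N. Q i i)"
proof (induction N arbitrary: Q)
  case (Suc N)
  have piv: "0 < Q N N" using pos_def_diag_pos[OF Suc.prems] by simp
  have pd: "pos_def N (schur_compl N Q)" using pos_def_schur_compl[OF Suc.prems] .
  have "(\<Prod>i<N. schur_compl N Q i i) \<le> (\<Prod>i<N. Q i i)"
  proof (rule prod_mono)
    fix i assume "i \<in> {..<N}"
    then have "0 < schur_compl N Q i i" "Q i N = Q N i"
      using pos_def_diag_pos[OF pd] pos_def_sym[OF Suc.prems, of i N] by auto
    then show "0 \<le> schur_compl N Q i i \<and> schur_compl N Q i i \<le> Q i i"
      using piv unfolding schur_compl_def by simp
  qed
  then show ?case using Suc.IH[OF pd] piv by (simp add: mult_left_mono)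
qed simp

lemma schur_rank_one_identity:
  fixes q a b x y z p :: real
  assumes p: "0 < p"
  shows "q + x * y - (a + x * z) * (b + z * y) / (p + z * z)
       = (q - a * b / p) + (p / (p + z^2)) * (x - z * a / p) * (y - z * b / p)"
proof -
  define D where "D = p + z * z"
  have D: "0 < D" unfolding D_def using p by (simp add: add_pos_nonneg)
  have "q + x * y - (a + x * z) * (b + z * y) / D - ((q - a * b / p) + (p / D) * (x - z * a / p) * (y - z * b / p))
     = (x * y * p * D + a * b * D - p * (a + x * z) * (b + z * y) - (p * x - z * a) * (p * y - z * b)) / (p * D)"
    using p D by (simp add: field_simps)
  also have "x * y * p * D + a * b * D - p * (a + x * z) * (b + z * y) - (p * x - z * a) * (p * y - z * b) = 0"
    unfolding D_def by (simp add: algebra_simps)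
  finally show ?thesis by (simp add: D_def power2_eq_square)
qed

lemma schur_compl_rank_one_update:
  fixes Q :: "nat \<Rightarrow> nat \<Rightarrow> real" and v :: "nat \<Rightarrow> real"
  assumes sym: "Q i N = Q N i" "Q j N = Q N j" and piv: "0 < Q N N"
  defines "w \<equiv> \<lambda>i. sqrt (Q N N / (Q N N + (v N)^2)) * (v i - v N * Q i N / Q N N)"
  shows "schur_compl N (\<lambda>i j. Q i j + v i * v j) i j = schur_compl N Q i j + w i * w j"
proof -
  have "0 < Q N N + (v N)^2" using piv by (simp add: add_pos_nonneg)
  with piv have "w i * w j = Q N N / (Q N N + (v N)^2) * (v i - v N * Q i N / Q N N) * (v j - v N * Q N j / Q N N)"
    unfolding w_def sym(2) by (simp add: ac_simps real_sqrt_mult[symmetric])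
  then show ?thesis
    unfolding schur_compl_def
    using schur_rank_one_identity[where q="Q i j" and a="Q i N" and b="Q N j" and x="v i" and y="v j"
        and z="v N", OF piv]
    by (simp add: ac_simps)
qed

lemma pivot_det_Suc_rank_one_update:
  fixes Q :: "nat \<Rightarrow> nat \<Rightarrow> real" and v :: "nat \<Rightarrow> real"
  assumes sym: "\<And>i. i < N \<Longrightarrow> Q i N = Q N i" and piv: "0 < Q N N"
  defines "w \<equiv> \<lambda>i. sqrt (Q N N / (Q N N + (v N)^2)) * (v i - v N * Q i N / Q N N)"
  shows "pivot_det (Suc N) (\<lambda>i j. Q i j + v i * v j)
    = (Q N N + (v N)^2) * pivot_det N (\<lambda>i j. schur_compl N Q i j + w i * w j)"
proof -
  have "pivot_det N (schur_compl N (\<lambda>i j. Q i j + v i * v j))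
      = pivot_det N (\<lambda>i j. schur_compl N Q i j + w i * w j)"
    by (rule pivot_det_cong) (simp add: schur_compl_rank_one_update sym piv w_def)
  then show ?thesis by (simp add: power2_eq_square)
qed

lemma rank_one_step_inequality:
  fixes p z D0 D1 X A y :: real
  assumes p: "0 < p" and D0: "0 < D0" and mono: "D0 \<le> D1" and X: "0 \<le> X"
    and bound: "D0 * (X + p / (p + z^2) * A^2) \<le> D1 * X" and A: "X = 0 \<Longrightarrow> A = 0"
  shows "p * D0 * (X + p * y^2 + (A + z * y)^2) \<le> (p + z^2) * D1 * (X + p * y^2)"
proof (cases "X = 0")
  case True
  then have "p * D0 * (X + p * y^2 + (A + z * y)^2) = (p + z^2) * D0 * (p * y^2)"
    using A by (simp add: algebra_simps power_mult_distrib)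
  also have "\<dots> \<le> (p + z^2) * D1 * (p * y^2)"
    using mono p by (intro mult_right_mono mult_left_mono) (auto simp: add_pos_nonneg)
  finally show ?thesis using True by simp
next
  case False
  with X have Xp: "0 < X" by simp
  have pz: "0 < p + z^2" using p by (simp add: add_pos_nonneg)
  have cs: "X * p * (A + z * y)^2 \<le> (X + p * y^2) * (p * A^2 + X * z^2)"
  proof -
    have "(X + p * y^2) * (p * A^2 + X * z^2) - X * p * (A + z * y)^2 = (p * y * A - X * z)^2"
      by (simp add: algebra_simps power2_eq_square)
    then show ?thesis by (smt (verit) zero_le_power2)
  qed
  have "X * (p * D0 * (X + p * y^2 + (A + z * y)^2))
      \<le> D0 * (p * X * (X + p * y^2) + (X + p * y^2) * (p * A^2 + X * z^2))"
    using mult_left_mono[OF cs, of D0] D0 by (simp add: algebra_simps)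
  also have "\<dots> = (X + p * y^2) * ((p + z^2) * (D0 * (X + p / (p + z^2) * A^2)))"
    using pz by (simp add: field_simps)
  also have "\<dots> \<le> (X + p * y^2) * ((p + z^2) * (D1 * X))"
    using bound pz X p by (intro mult_left_mono) auto
  also have "\<dots> = X * ((p + z^2) * D1 * (X + p * y^2))" by (simp add: algebra_simps)
  finally show ?thesis using Xp by simp
qed

lemma pivot_det_mono_of_bound:
  assumes pd: "pos_def N Q" and s: "\<And>x. 0 \<le> s x"
    and bound: "\<And>x. pivot_det N Q * (quad_form N Q x + s x) \<le> pivot_det N Q' * quad_form N Q x"
  shows "pivot_det N Q \<le> pivot_det N Q'"
proof (cases N)
  case (Suc M)
  define e where "e = (\<lambda>j::nat. if j = 0 then 1 else (0::real))"
  have "0 < quad_form N Q e" using pos_def_quad_form_pos[OF pd, of 0] Suc by (simp add: e_def)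
  moreover have "pivot_det N Q * quad_form N Q e \<le> pivot_det N Q' * quad_form N Q e"
    using bound[of e] s[of e] pivot_det_pos[OF pd] by (smt (verit) mult_left_mono)
  ultimately show ?thesis by simp
qed simp

text \<open>Inverse-free combination of the matrix determinant lemma
  \<open>det (Q + v v\<^sup>T) = det Q * (1 + v\<^sup>T Q\<^sup>-\<^sup>1 v)\<close> with the Cauchy--Schwarz inequality
  \<open>(x\<^sup>T v)\<^sup>2 \<le> x\<^sup>T Q x * v\<^sup>T Q\<^sup>-\<^sup>1 v\<close>.\<close>

lemma pivot_det_rank_one_update:
  "pos_def N Q \<Longrightarrow>
    pivot_det N Q * (quad_form N Q x + (\<Sum>i<N. x i * v i)^2)
      \<le> pivot_det N (\<lambda>i j. Q i j + v i * v j) * quad_form N Q x"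
proof (induction N arbitrary: Q v x)
  case 0 then show ?case by (simp add: quad_form_def)
next
  case (Suc N)
  define p where "p = Q N N"
  define z where "z = v N"
  define Q' where "Q' = schur_compl N Q"
  define w where "w i = sqrt (p / (p + z^2)) * (v i - z * Q i N / p)" for i
  have p: "0 < p" using pos_def_diag_pos[OF Suc.prems] by (simp add: p_def)
  have sym: "\<And>i. i < N \<Longrightarrow> Q i N = Q N i" using pos_def_sym[OF Suc.prems] by simp
  have pd: "pos_def N Q'" unfolding Q'_def using pos_def_schur_compl[OF Suc.prems] .
  have IH: "pivot_det N Q' * (quad_form N Q' y + (\<Sum>i<N. y i * w i)^2)
      \<le> pivot_det N (\<lambda>i j. Q' i j + w i * w j) * quad_form N Q' y" for y
    using Suc.IH[OF pd] .
  have det_upd: "pivot_det (Suc N) (\<lambda>i j. Q i j + v i * v j)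
      = (p + z^2) * pivot_det N (\<lambda>i j. Q' i j + w i * w j)"
    using pivot_det_Suc_rank_one_update[of N Q, OF sym p[unfolded p_def]]
    by (simp add: p_def z_def Q'_def w_def)
  define A where "A = (\<Sum>i<N. x i * (v i - z * Q i N / p))"
  define y where "y = x N + (\<Sum>i<N. Q N i * x i) / p"
  have lin: "(\<Sum>i<Suc N. x i * v i) = A + z * y"
    using p sym by (simp add: A_def y_def z_def algebra_simps sum_subtractf sum_distrib_left
        sum_divide_distrib)
  have "(\<Sum>i<N. x i * w i) = sqrt (p / (p + z^2)) * A"
    by (simp add: A_def w_def sum_distrib_left algebra_simps)
  then have lin_w: "(\<Sum>i<N. x i * w i)^2 = p / (p + z^2) * A^2"
    using p by (simp add: power_mult_distrib)
  have A0: "A = 0" if "quad_form N Q' x = 0"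
    using pos_def_quad_form_eq_0[OF pd that] by (simp add: A_def)
  have "pivot_det N Q' \<le> pivot_det N (\<lambda>i j. Q' i j + w i * w j)"
    by (rule pivot_det_mono_of_bound[OF pd _ IH]) simp
  moreover have "quad_form (Suc N) Q x = quad_form N Q' x + p * y^2"
    using quad_form_Suc[of N Q, OF sym] p by (simp add: p_def y_def Q'_def)
  moreover have "pivot_det (Suc N) Q = p * pivot_det N Q'" by (simp add: p_def Q'_def)
  ultimately show ?case
    unfolding det_upd lin
    using rank_one_step_inequality[OF p pivot_det_pos[OF pd] _ pos_def_quad_form_nonneg[OF pd]
        IH[of x, unfolded lin_w] A0]
    by simp
qed

lemma pivot_det_rank_one_mono:
  "pos_def N Q \<Longrightarrow> pivot_det N Q \<le> pivot_det N (\<lambda>i j. Q i j + v i * v j)"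
  by (rule pivot_det_mono_of_bound[OF _ _ pivot_det_rank_one_update]) simp_all

section \<open>The elliptical potential lemma\<close>

definition reg_gram :: "real \<Rightarrow> (nat \<Rightarrow> nat \<Rightarrow> real) \<Rightarrow> nat \<Rightarrow> nat \<Rightarrow> nat \<Rightarrow> real" where
  "reg_gram lam v M a b = lam * (if a = b then 1 else 0) + (\<Sum>j<M. v j a * v j b)"

text \<open>\<open>v\<^sub>i\<^sup>T W\<^sub>i\<^sup>-\<^sup>1 v\<^sub>i \<ge> 1/2\<close> for \<open>W\<^sub>i = reg_gram lam v i\<close>, in the variational form
  \<open>v\<^sup>T W\<^sup>-\<^sup>1 v = sup\<^sub>x (x\<^sup>T v)\<^sup>2 / x\<^sup>T W x\<close>.\<close>

definition large_leverage :: "nat \<Rightarrow> real \<Rightarrow> (nat \<Rightarrow> nat \<Rightarrow> real) \<Rightarrow> nat \<Rightarrow> bool" where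
  "large_leverage N lam v i \<longleftrightarrow> (\<exists>x. 0 < (\<Sum>a<N. x a * v i a)^2 \<and>
     quad_form N (reg_gram lam v i) x \<le> 2 * (\<Sum>a<N. x a * v i a)^2)"

lemma reg_gram_Suc: "reg_gram lam v (Suc M) = (\<lambda>a b. reg_gram lam v M a b + v M a * v M b)"
  unfolding reg_gram_def by (simp add: algebra_simps)

lemma quad_form_reg_gram:
  "quad_form N (reg_gram lam v M) x = lam * (\<Sum>a<N. (x a)^2) + (\<Sum>j<M. (\<Sum>a<N. x a * v j a)^2)"
proof -
  have "quad_form N (reg_gram lam v M) x = (\<Sum>a<N. \<Sum>b<N. lam * (x a * (if a = b then 1 else 0) * x b))
      + (\<Sum>a<N. \<Sum>b<N. \<Sum>j<M. (x a * v j a) * (x b * v j b))"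
    unfolding quad_form_def reg_gram_def by (simp add: sum.distrib algebra_simps sum_distrib_left)
  also have "(\<Sum>a<N. \<Sum>b<N. lam * (x a * (if a = b then 1 else 0) * x b)) = lam * (\<Sum>a<N. (x a)^2)"
  proof -
    have "\<And>a b. lam * (x a * (if a = b then 1 else 0) * x b) = (if a = b then lam * (x a)^2 else 0)"
      by (simp add: power2_eq_square)
    then show ?thesis by (simp add: sum_distrib_left)
  qed
  also have "(\<Sum>a<N. \<Sum>b<N. \<Sum>j<M. (x a * v j a) * (x b * v j b)) = (\<Sum>j<M. (\<Sum>a<N. x a * v j a)^2)"
    by (simp add: power2_eq_square sum_product sum.swap[of _ "{..<M}"])
  finally show ?thesis .
qed

lemma pos_def_reg_gram:
  assumes lam: "0 < lam"
  shows "pos_def N (reg_gram lam v M)"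
  unfolding pos_def_def
proof (intro conjI allI impI)
  fix x :: "nat \<Rightarrow> real" assume "\<exists>i<N. x i \<noteq> 0"
  then obtain i where "i < N" "x i \<noteq> 0" by blast
  then have "0 < (\<Sum>a<N. (x a)^2)"
    by (intro sum_pos2[of _ i]) auto
  then show "0 < quad_form N (reg_gram lam v M) x"
    unfolding quad_form_reg_gram using lam by (simp add: add_pos_nonneg sum_nonneg)
qed (simp add: reg_gram_def mult.commute)

lemma pivot_det_scaled_id: "pivot_det N (\<lambda>a b. lam * (if a = b then 1 else 0)) = lam ^ N"
proof (induction N)
  case (Suc N)
  have "pivot_det N (schur_compl N (\<lambda>a b. lam * (if a = b then 1 else 0)))
      = pivot_det N (\<lambda>a b. lam * (if a = b then 1 else 0))"
    by (rule pivot_det_cong) (auto simp: schur_compl_def)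
  then show ?case using Suc.IH by simp
qed simp

lemma pivot_det_reg_gram_grows:
  assumes lam: "0 < lam" and large: "large_leverage N lam v M"
  shows "3/2 * pivot_det N (reg_gram lam v M) \<le> pivot_det N (reg_gram lam v (Suc M))"
proof -
  have pd: "pos_def N (reg_gram lam v M)" using pos_def_reg_gram[OF lam] .
  obtain x where x: "0 < (\<Sum>a<N. x a * v M a)^2"
    and qx: "quad_form N (reg_gram lam v M) x \<le> 2 * (\<Sum>a<N. x a * v M a)^2"
    using large unfolding large_leverage_def by blast
  obtain a where "a < N" "x a \<noteq> 0"
    using x by (metis (no_types, lifting) lessThan_iff mult_zero_left sum.neutral zero_power2 less_irrefl)
  then have q: "0 < quad_form N (reg_gram lam v M) x" using pos_def_quad_form_pos[OF pd] by blast
  have "(3/2 * pivot_det N (reg_gram lam v M)) * quad_form N (reg_gram lam v M) x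
      \<le> pivot_det N (reg_gram lam v M) * (quad_form N (reg_gram lam v M) x + (\<Sum>a<N. x a * v M a)^2)"
    using qx pivot_det_pos[OF pd] by (simp add: algebra_simps)
  also have "\<dots> \<le> pivot_det N (reg_gram lam v (Suc M)) * quad_form N (reg_gram lam v M) x"
    unfolding reg_gram_Suc by (rule pivot_det_rank_one_update[OF pd])
  finally show ?thesis using q by simp
qed

lemma pivot_det_reg_gram_lower:
  assumes lam: "0 < lam"
  shows "lam ^ N * (3/2) ^ card {i. i < M \<and> large_leverage N lam v i} \<le> pivot_det N (reg_gram lam v M)"
proof (induction M)
  case 0
  have "reg_gram lam v 0 = (\<lambda>a b. lam * (if a = b then 1 else 0))"
    by (intro ext) (simp add: reg_gram_def)
  then show ?case by (simp add: pivot_det_scaled_id)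
next
  case (Suc M)
  have mono: "pivot_det N (reg_gram lam v M) \<le> pivot_det N (reg_gram lam v (Suc M))"
    unfolding reg_gram_Suc using pivot_det_rank_one_mono[OF pos_def_reg_gram[OF lam]] .
  have set_Suc: "{i. i < Suc M \<and> large_leverage N lam v i} =
      (if large_leverage N lam v M then insert M else id) {i. i < M \<and> large_leverage N lam v i}"
    by (auto simp: less_Suc_eq)
  show ?case
    using Suc.IH mono pivot_det_reg_gram_grows[OF lam, of N v M]
    by (auto simp: set_Suc)
qed

lemma pivot_det_reg_gram_upper:
  assumes lam: "0 < lam" and B: "\<And>j a. j < M \<Longrightarrow> a < N \<Longrightarrow> (v j a)^2 \<le> B"
  shows "pivot_det N (reg_gram lam v M) \<le> (lam + real M * B) ^ N"
proof -
  have "pivot_det N (reg_gram lam v M) \<le> (\<Prod>a<N. reg_gram lam v M a a)"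
    using pivot_det_le_prod_diag[OF pos_def_reg_gram[OF lam]] .
  also have "\<dots> \<le> (\<Prod>a<N. lam + real M * B)"
  proof (rule prod_mono)
    fix a assume "a \<in> {..<N}"
    then have "(\<Sum>j<M. v j a * v j a) \<le> (\<Sum>j<M. B)"
      using B by (intro sum_mono) (auto simp: power2_eq_square)
    then show "0 \<le> reg_gram lam v M a a \<and> reg_gram lam v M a a \<le> lam + real M * B"
      unfolding reg_gram_def using lam by (simp add: sum_nonneg)
  qed
  finally show ?thesis by simp
qed

lemma elliptical_potential:
  assumes lam: "0 < lam" and B: "\<And>j a. j < M \<Longrightarrow> a < N \<Longrightarrow> (v j a)^2 \<le> B"
  shows "lam ^ N * (3/2) ^ card {i. i < M \<and> large_leverage N lam v i} \<le> (lam + real M * B) ^ N"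
  using pivot_det_reg_gram_lower[OF lam] pivot_det_reg_gram_upper[OF lam B] by (rule order.trans)

section \<open>Orthonormal coordinates\<close>

lemma ip_sym: "ip d x y = ip d y x"
  unfolding ip_def by (simp add: mult.commute)

lemma ip_self_nonneg: "0 \<le> ip d x x"
  unfolding ip_def by (intro sum_nonneg) auto

lemma ip_diff_right: "ip d z (\<lambda>i. x i - y i) = ip d z x - ip d z y"
  unfolding ip_def by (simp add: sum_subtractf algebra_simps)

lemma ip_scale_right: "ip d z (\<lambda>i. c * x i) = c * ip d z x"
  unfolding ip_def by (simp add: sum_distrib_left algebra_simps)

lemma ip_sum_right: "ip d z (\<lambda>i. \<Sum>j\<in>J. c j * f j i) = (\<Sum>j\<in>J. c j * ip d z (f j))"
  unfolding ip_def by (simp add: sum_distrib_left sum.swap[of _ J] algebra_simps)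

lemma ip_sum_left: "ip d (\<lambda>i. \<Sum>j\<in>J. c j * f j i) z = (\<Sum>j\<in>J. c j * ip d (f j) z)"
  using ip_sum_right[of d z c f J] by (simp add: ip_sym)

lemma ip_self_diff_scaled:
  "ip d (\<lambda>i. x i - c * y i) (\<lambda>i. x i - c * y i) = ip d x x - 2 * c * ip d x y + c^2 * ip d y y"
  unfolding ip_def by (simp add: sum_subtractf sum.distrib sum_distrib_left algebra_simps power2_eq_square)

lemma ip_self_diff_le: "ip d (\<lambda>i. x i - y i) (\<lambda>i. x i - y i) \<le> 2 * ip d x x + 2 * ip d y y"
proof -
  have "ip d (\<lambda>i. x i - y i) (\<lambda>i. x i - y i) + ip d (\<lambda>i. x i + y i) (\<lambda>i. x i + y i)
      = 2 * ip d x x + 2 * ip d y y"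
    unfolding ip_def by (simp add: sum.distrib[symmetric] sum_distrib_left algebra_simps)
  then show ?thesis using ip_self_nonneg[of d "\<lambda>i. x i + y i"] by linarith
qed

definition orthonormal :: "nat \<Rightarrow> nat \<Rightarrow> (nat \<Rightarrow> nat \<Rightarrow> real) \<Rightarrow> bool" where
  "orthonormal d N b \<longleftrightarrow> (\<forall>j<N. \<forall>l<N. ip d (b j) (b l) = (if j = l then 1 else 0))"

definition inspan :: "nat \<Rightarrow> (nat \<Rightarrow> nat \<Rightarrow> real) \<Rightarrow> (nat \<Rightarrow> real) \<Rightarrow> bool" where
  "inspan N b y \<longleftrightarrow> (\<exists>c. \<forall>i. y i = (\<Sum>j<N. c j * b j i))"

lemma orthonormal_unit_vectors: "orthonormal d d (\<lambda>j i. if i = j then 1 else 0)"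
  unfolding orthonormal_def
proof (intro allI impI)
  fix j l assume "j < d" "l < d"
  have "ip d (\<lambda>i. if i = j then 1 else 0) (\<lambda>i. if i = l then 1 else 0)
      = (\<Sum>i<d. if i = j then (if j = l then 1 else 0) else 0)"
    unfolding ip_def by (intro sum.cong) auto
  then show "ip d (\<lambda>i. if i = j then 1 else 0) (\<lambda>i. if i = l then 1 else 0) = (if j = l then 1 else 0)"
    using \<open>j < d\<close> by simp
qed

lemma in_Rd_unit_vectors: "in_Rd d (\<lambda>i. if i = j then 1 else 0) \<longleftrightarrow> j < d"
  unfolding in_Rd_def by auto

lemma inspan_unit_vectors:
  assumes "in_Rd d x"
  shows "inspan d (\<lambda>j i. if i = j then 1 else 0) x"
  unfolding inspan_def
proof (intro exI allI)
  fix i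
  have "(\<Sum>j<d. x j * (if i = j then 1 else 0)) = (\<Sum>j<d. if i = j then x i else 0)"
    by (intro sum.cong) auto
  then show "x i = (\<Sum>j<d. x j * (if i = j then 1 else 0))"
    using assms unfolding in_Rd_def by (simp add: not_less)
qed

lemma intrinsic_dim_basis:
  assumes "\<forall>x\<in>S. in_Rd d x"
  obtains b where "orthonormal d (intrinsic_dim d S) b" "\<forall>x\<in>S. inspan (intrinsic_dim d S) b x"
proof -
  define P where "P k \<longleftrightarrow> (\<exists>b :: nat \<Rightarrow> nat \<Rightarrow> real.
      (\<forall>j<k. in_Rd d (b j)) \<and> orthonormal d k b \<and> (\<forall>x\<in>S. inspan k b x))" for k
  have "P d"
    unfolding P_def using assms orthonormal_unit_vectors inspan_unit_vectors
    by (intro exI[of _ "\<lambda>j i. if i = j then 1 else 0"]) (simp add: in_Rd_unit_vectors)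
  then have "P (Least P)" by (rule LeastI)
  moreover have "intrinsic_dim d S = Least P"
    unfolding intrinsic_dim_def P_def orthonormal_def inspan_def by simp
  ultimately show ?thesis using that unfolding P_def by auto
qed

lemma inspan_diff: "inspan N b x \<Longrightarrow> inspan N b y \<Longrightarrow> inspan N b (\<lambda>i. x i - y i)"
proof -
  assume "inspan N b x" "inspan N b y"
  then obtain c c' where "\<And>i. x i = (\<Sum>j<N. c j * b j i)" "\<And>i. y i = (\<Sum>j<N. c' j * b j i)"
    unfolding inspan_def by blast
  then have "\<forall>i. x i - y i = (\<Sum>j<N. (c j - c' j) * b j i)" by (simp add: sum_subtractf algebra_simps)
  then show ?thesis unfolding inspan_def by (intro exI[of _ "\<lambda>j. c j - c' j"])
qed

lemma ip_combination_orthonormal: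
  assumes on: "orthonormal d N b" and a: "a < N"
  shows "ip d (\<lambda>i. \<Sum>j<N. c j * b j i) (b a) = c a"
proof -
  have "ip d (\<lambda>i. \<Sum>j<N. c j * b j i) (b a) = (\<Sum>j<N. c j * ip d (b j) (b a))" by (rule ip_sum_left)
  also have "\<dots> = (\<Sum>j<N. if j = a then c a else 0)"
    using on a unfolding orthonormal_def by (intro sum.cong) auto
  finally show ?thesis using a by simp
qed

lemma ip_eq_sum_coords:
  assumes on: "orthonormal d N b" and y: "inspan N b y"
  shows "ip d z y = (\<Sum>a<N. ip d z (b a) * ip d y (b a))"
proof -
  obtain c where y_eq: "y = (\<lambda>i. \<Sum>j<N. c j * b j i)" using y unfolding inspan_def by blast
  have "(\<Sum>j<N. c j * ip d z (b j)) = (\<Sum>a<N. ip d z (b a) * ip d y (b a))"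
    unfolding y_eq using ip_combination_orthonormal[OF on] by (intro sum.cong) auto
  then show ?thesis unfolding y_eq ip_sum_right .
qed

lemma bessel_inequality:
  assumes on: "orthonormal d N b"
  shows "(\<Sum>a<N. (ip d z (b a))^2) \<le> ip d z z"
proof -
  define w where "w = (\<lambda>i. \<Sum>a<N. ip d z (b a) * b a i)"
  have w: "\<And>a. a < N \<Longrightarrow> ip d w (b a) = ip d z (b a)"
    unfolding w_def by (rule ip_combination_orthonormal[OF on])
  have zw: "ip d z w = (\<Sum>a<N. (ip d z (b a))^2)"
    unfolding w_def ip_sum_right by (simp add: power2_eq_square)
  have "ip d w w = ip d w (\<lambda>i. \<Sum>a<N. ip d z (b a) * b a i)" by (simp add: w_def)
  also have "\<dots> = (\<Sum>a<N. (ip d z (b a))^2)"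
    unfolding ip_sum_right using w by (simp add: power2_eq_square)
  finally have ww: "ip d w w = ip d z w" using zw by simp
  have "0 \<le> ip d (\<lambda>i. z i - 1 * w i) (\<lambda>i. z i - 1 * w i)" by (rule ip_self_nonneg)
  then show ?thesis using ip_self_diff_scaled[of d z 1 w] ww zw by simp
qed

section \<open>Approximate separation from the cone of steps\<close>

definition cone_residual :: "(nat \<Rightarrow> real) list \<Rightarrow> (nat \<Rightarrow> real) \<Rightarrow> (nat \<Rightarrow> real) \<Rightarrow> nat \<Rightarrow> real" where
  "cone_residual xs x \<alpha> = (\<lambda>i. x i - (xs ! 0) i - (\<Sum>j<length xs - 1. \<alpha> j * ((xs ! (j+1)) i - (xs ! j) i)))"

definition cone_dist :: "nat \<Rightarrow> (nat \<Rightarrow> real) list \<Rightarrow> (nat \<Rightarrow> real) \<Rightarrow> real" where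
  "cone_dist d xs x = Inf {vnorm d (cone_residual xs x \<alpha>) | \<alpha>. \<forall>j<length xs - 1. 0 \<le> \<alpha> j}"

lemma derives_iff_cone_dist: "derives d u \<epsilon> T x \<longleftrightarrow> cone_dist d (sorted_desc d u T) x \<le> \<epsilon>"
  unfolding derives_def cone_dist_def cone_residual_def Let_def ..

lemma cone_dist_le:
  assumes "\<forall>j<length xs - 1. 0 \<le> \<alpha> j"
  shows "cone_dist d xs x \<le> vnorm d (cone_residual xs x \<alpha>)"
  unfolding cone_dist_def
proof (rule cInf_lower)
  show "bdd_below {vnorm d (cone_residual xs x \<alpha>) | \<alpha>. \<forall>j<length xs - 1. 0 \<le> \<alpha> j}"
    by (rule bdd_belowI[of _ 0]) (auto simp: vnorm_def ip_self_nonneg)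
qed (use assms in blast)

lemma cone_dist_approx:
  assumes "0 < \<delta>"
  obtains \<alpha> where "\<forall>j<length xs - 1. 0 \<le> \<alpha> j" "vnorm d (cone_residual xs x \<alpha>) < cone_dist d xs x + \<delta>"
proof -
  have "{vnorm d (cone_residual xs x \<alpha>) | \<alpha>. \<forall>j<length xs - 1. 0 \<le> \<alpha> j} \<noteq> {}" by force
  from cInf_lessD[OF this, of "cone_dist d xs x + \<delta>"] assms that show ?thesis
    unfolding cone_dist_def by auto
qed

lemma cone_residual_shift:
  assumes j: "j < length xs - 1"
  shows "cone_residual xs x (\<alpha>(j := \<alpha> j + t))
    = (\<lambda>i. cone_residual xs x \<alpha> i - t * ((xs ! (j+1)) i - (xs ! j) i))"
proof
  fix i
  define g where "g l = (xs ! (l+1)) i - (xs ! l) i" for l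
  have "(\<Sum>l<length xs - 1. (\<alpha>(j := \<alpha> j + t)) l * g l)
      = (\<Sum>l<length xs - 1. \<alpha> l * g l) + (\<Sum>l<length xs - 1. if l = j then t * g j else 0)"
    unfolding sum.distrib[symmetric] by (intro sum.cong refl) (auto simp: ring_distribs)
  then show "cone_residual xs x (\<alpha>(j := \<alpha> j + t)) i = cone_residual xs x \<alpha> i - t * g j"
    using j unfolding cone_residual_def g_def by simp
qed

lemma cone_residual_shrink:
  "cone_residual xs x (\<lambda>j. (1 - l) * \<alpha> j)
    = (\<lambda>i. cone_residual xs x \<alpha> i - l * (cone_residual xs x \<alpha> i - (x i - (xs ! 0) i)))"
proof
  fix i
  define g where "g j = (xs ! (j+1)) i - (xs ! j) i" for j
  have "(\<Sum>j<length xs - 1. (1 - l) * \<alpha> j * g j)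
      = (\<Sum>j<length xs - 1. \<alpha> j * g j) - l * (\<Sum>j<length xs - 1. \<alpha> j * g j)"
    by (simp add: sum_distrib_left sum_subtractf algebra_simps)
  then show "cone_residual xs x (\<lambda>j. (1 - l) * \<alpha> j) i
      = cone_residual xs x \<alpha> i - l * (cone_residual xs x \<alpha> i - (x i - (xs ! 0) i))"
    unfolding cone_residual_def g_def by (simp add: algebra_simps)
qed

text \<open>First-order optimality of a near-minimiser \<open>r\<close> in the direction \<open>w\<close>.\<close>

lemma ip_le_of_perturbation:
  assumes le: "ip d r r - \<delta> \<le> ip d (\<lambda>i. r i - t * w i) (\<lambda>i. r i - t * w i)" and t: "0 < t"
  shows "ip d r w \<le> \<delta> / (2 * t) + t / 2 * ip d w w"
proof -
  have "2 * t * ip d r w \<le> \<delta> + t^2 * ip d w w"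
    using le unfolding ip_self_diff_scaled by simp
  then show ?thesis using t by (simp add: field_simps power2_eq_square)
qed

lemma near_minimal_residual_edge:
  fixes xs :: "(nat \<Rightarrow> real) list" and x \<alpha> :: "nat \<Rightarrow> real"
  defines "r \<equiv> cone_residual xs x \<alpha>"
  assumes \<alpha>: "\<forall>j<length xs - 1. 0 \<le> \<alpha> j" and m: "0 \<le> cone_dist d xs x"
    and near: "ip d r r \<le> (cone_dist d xs x)^2 + \<theta>^2 / 26" and \<theta>: "0 < \<theta>"
    and j: "j < length xs - 1"
    and edge: "ip d (\<lambda>i. (xs ! (j+1)) i - (xs ! j) i) (\<lambda>i. (xs ! (j+1)) i - (xs ! j) i) \<le> 4"
  shows "ip d r (\<lambda>i. (xs ! (j+1)) i - (xs ! j) i) \<le> \<theta>"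
proof -
  define g where "g = (\<lambda>i. (xs ! (j+1)) i - (xs ! j) i)"
  have "\<forall>l<length xs - 1. 0 \<le> (\<alpha>(j := \<alpha> j + \<theta> / 4)) l" using \<alpha> \<theta> by simp
  from cone_dist_le[OF this, of d x] m
  have "(cone_dist d xs x)^2 \<le> ip d (\<lambda>i. r i - \<theta> / 4 * g i) (\<lambda>i. r i - \<theta> / 4 * g i)"
    unfolding cone_residual_shift[OF j] vnorm_def r_def g_def by (intro sqrt_ge_absD) simp
  with near have "ip d r r - \<theta>^2 / 26 \<le> ip d (\<lambda>i. r i - \<theta> / 4 * g i) (\<lambda>i. r i - \<theta> / 4 * g i)"
    by linarith
  from ip_le_of_perturbation[OF this] \<theta>
  have "ip d r g \<le> \<theta> / 13 + \<theta> / 8 * ip d g g" by (simp add: power2_eq_square)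
  also have "\<dots> \<le> \<theta> / 13 + \<theta> / 8 * 4"
    using edge \<theta> unfolding g_def by (intro add_left_mono mult_left_mono) auto
  finally show ?thesis using \<theta> unfolding g_def by simp
qed

lemma near_minimal_residual_target:
  fixes xs :: "(nat \<Rightarrow> real) list" and x \<alpha> :: "nat \<Rightarrow> real"
  defines "r \<equiv> cone_residual xs x \<alpha>"
  assumes \<alpha>: "\<forall>j<length xs - 1. 0 \<le> \<alpha> j" and m: "0 \<le> cone_dist d xs x"
    and near: "ip d r r \<le> (cone_dist d xs x)^2 + \<theta>^2 / 26" and \<theta>: "0 < \<theta>" "\<theta> \<le> 26"
    and bound: "ip d (\<lambda>i. r i - (x i - (xs ! 0) i)) (\<lambda>i. r i - (x i - (xs ! 0) i)) \<le> 26"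
  shows "ip d r r - \<theta> \<le> ip d r (\<lambda>i. x i - (xs ! 0) i)"
proof -
  define p where "p = (\<lambda>i. r i - (x i - (xs ! 0) i))"
  have "\<forall>j<length xs - 1. 0 \<le> (1 - \<theta> / 26) * \<alpha> j" using \<alpha> \<theta> by simp
  from cone_dist_le[OF this, of d x] m
  have "(cone_dist d xs x)^2 \<le> ip d (\<lambda>i. r i - \<theta> / 26 * p i) (\<lambda>i. r i - \<theta> / 26 * p i)"
    unfolding cone_residual_shrink vnorm_def r_def p_def by (intro sqrt_ge_absD) simp
  with near have "ip d r r - \<theta>^2 / 26 \<le> ip d (\<lambda>i. r i - \<theta> / 26 * p i) (\<lambda>i. r i - \<theta> / 26 * p i)"
    by linarith
  from ip_le_of_perturbation[OF this] \<theta>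
  have "ip d r p \<le> \<theta> / 2 + \<theta> / 52 * ip d p p" by (simp add: power2_eq_square)
  also have "\<dots> \<le> \<theta> / 2 + \<theta> / 52 * 26"
    using bound \<theta> unfolding p_def by (intro add_left_mono mult_left_mono) auto
  finally show ?thesis using \<theta> unfolding p_def ip_diff_right by simp
qed

lemma cone_dist_le_first: "cone_dist d xs x \<le> vnorm d (\<lambda>i. x i - (xs ! 0) i)"
  using cone_dist_le[of xs "\<lambda>_. 0" d x] by (simp add: cone_residual_def)

lemma cone_dist_near_minimiser:
  assumes \<theta>: "0 < \<theta>" and m: "0 \<le> cone_dist d xs x" "cone_dist d xs x \<le> 2"
  obtains \<alpha> where "\<forall>j<length xs - 1. 0 \<le> \<alpha> j"
    and "ip d (cone_residual xs x \<alpha>) (cone_residual xs x \<alpha>) \<le> (cone_dist d xs x)^2 + \<theta>^2 / 26"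
    and "ip d (cone_residual xs x \<alpha>) (cone_residual xs x \<alpha>) \<le> 9"
    and "sqrt (ip d (cone_residual xs x \<alpha>) (cone_residual xs x \<alpha>)) < cone_dist d xs x + \<theta>"
proof -
  define m where "m = cone_dist d xs x"
  define \<delta> where "\<delta> = min 1 (min \<theta> (\<theta>^2 / 130))"
  have \<delta>: "0 < \<delta>" "\<delta> \<le> 1" "\<delta> \<le> \<theta>" "\<delta> * 5 \<le> \<theta>^2 / 26" using \<theta> by (auto simp: \<delta>_def)
  obtain \<alpha> where \<alpha>: "\<forall>j<length xs - 1. 0 \<le> \<alpha> j" and near: "vnorm d (cone_residual xs x \<alpha>) < m + \<delta>"
    using cone_dist_approx[OF \<delta>(1)] unfolding m_def by blast
  define r where "r = cone_residual xs x \<alpha>"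
  have rr: "ip d r r < (m + \<delta>)^2"
    using near m \<delta> ip_self_nonneg[of d r] real_sqrt_less_iff[of "ip d r r" "(m + \<delta>)^2"]
    by (simp add: r_def vnorm_def m_def)
  have "(m + \<delta>)^2 = m^2 + \<delta> * (2 * m + \<delta>)" by (simp add: algebra_simps power2_eq_square)
  also have "\<dots> \<le> m^2 + \<delta> * 5" using \<delta> m by (intro add_left_mono mult_left_mono) (auto simp: m_def)
  also have "\<dots> \<le> m^2 + \<theta>^2 / 26" using \<delta> by simp
  finally have "ip d r r \<le> m^2 + \<theta>^2 / 26" using rr by simp
  moreover have "(m + \<delta>)^2 \<le> 3^2" using m \<delta> by (intro power_mono) (auto simp: m_def)
  moreover have "sqrt (ip d r r) < m + \<theta>" using near \<delta> by (simp add: r_def vnorm_def)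
  ultimately show ?thesis using that \<alpha> rr unfolding r_def m_def by simp
qed

text \<open>An approximate Farkas lemma. The separating functional is the residual of a near-minimiser.\<close>

lemma cone_separation:
  assumes far: "\<epsilon> < cone_dist d xs x" and \<epsilon>: "0 < \<epsilon>" "\<epsilon> < 1" and K: "0 \<le> K"
    and nx: "ip d x x \<le> 1" and nxs: "\<And>y. y \<in> set xs \<Longrightarrow> ip d y y \<le> 1" and ne: "xs \<noteq> []"
  shows "\<exists>r \<theta>. 0 \<le> \<theta> \<and> (\<forall>j<length xs - 1. ip d r (\<lambda>i. (xs ! (j+1)) i - (xs ! j) i) \<le> \<theta>) \<and>
           \<epsilon> * sqrt (ip d r r) + K * \<theta> < ip d r (\<lambda>i. x i - (xs ! 0) i)"
proof -
  define m where "m = cone_dist d xs x"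
  have m0: "0 < m" using far \<epsilon> by (simp add: m_def)
  have x0: "ip d (\<lambda>i. x i - (xs ! 0) i) (\<lambda>i. x i - (xs ! 0) i) \<le> 4"
    using ip_self_diff_le[of d x "xs ! 0"] nx nxs[of "xs ! 0"] ne by simp
  then have m2: "m \<le> 2"
    using cone_dist_le_first[of d xs x] real_le_lsqrt[of 2] by (force simp: m_def vnorm_def)
  define \<theta> where "\<theta> = (m^2 - \<epsilon> * m) / (K + 3)"
  have "(K + 3) * \<theta> = m^2 - \<epsilon> * m" using K by (simp add: \<theta>_def)
  then have \<theta>K: "K * \<theta> + 3 * \<theta> = m^2 - \<epsilon> * m" by (simp add: algebra_simps)
  have \<theta>0: "0 < \<theta>" using far m0 K by (simp add: \<theta>_def m_def power2_eq_square)
  have "0 < \<epsilon> * m" "m^2 \<le> 4" "0 \<le> K * \<theta>" using \<epsilon> m0 m2 K \<theta>0 power_mono[of m 2 2] by auto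
  then have \<theta>26: "\<theta> \<le> 26" using \<theta>K by linarith
  obtain \<alpha> where \<alpha>: "\<forall>j<length xs - 1. 0 \<le> \<alpha> j"
    and near: "ip d (cone_residual xs x \<alpha>) (cone_residual xs x \<alpha>) \<le> m^2 + \<theta>^2 / 26"
    and r9: "ip d (cone_residual xs x \<alpha>) (cone_residual xs x \<alpha>) \<le> 9"
    and r_norm: "sqrt (ip d (cone_residual xs x \<alpha>) (cone_residual xs x \<alpha>)) < m + \<theta>"
    using cone_dist_near_minimiser[OF \<theta>0, of d xs x] m0 m2 unfolding m_def by auto
  define r where "r = cone_residual xs x \<alpha>"
  have "ip d (\<lambda>i. r i - (x i - (xs ! 0) i)) (\<lambda>i. r i - (x i - (xs ! 0) i)) \<le> 26"
    using ip_self_diff_le[of d r "\<lambda>i. x i - (xs ! 0) i"] x0 r9 by (simp add: r_def)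
  then have "ip d r r - \<theta> \<le> ip d r (\<lambda>i. x i - (xs ! 0) i)"
    using near_minimal_residual_target[where d=d and x=x, OF \<alpha> _ _ \<theta>0 \<theta>26] near m0
    unfolding r_def m_def by simp
  moreover have "m^2 \<le> ip d r r"
    using cone_dist_le[OF \<alpha>, of d x] m0 by (simp add: m_def r_def vnorm_def sqrt_ge_absD)
  moreover have "\<epsilon> * sqrt (ip d r r) < \<epsilon> * m + \<epsilon> * \<theta>"
    using mult_strict_left_mono[OF r_norm \<epsilon>(1)] by (simp add: r_def distrib_left)
  moreover have "\<epsilon> * \<theta> \<le> \<theta>" by (rule mult_left_le_one_le) (use \<epsilon> \<theta>0 in auto)
  ultimately have "\<epsilon> * sqrt (ip d r r) + K * \<theta> < ip d r (\<lambda>i. x i - (xs ! 0) i)"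
    using \<theta>K \<theta>0 by linarith
  moreover have "ip d r (\<lambda>i. (xs ! (j+1)) i - (xs ! j) i) \<le> \<theta>" if j: "j < length xs - 1" for j
  proof -
    have "ip d (\<lambda>i. (xs ! (j+1)) i - (xs ! j) i) (\<lambda>i. (xs ! (j+1)) i - (xs ! j) i) \<le> 4"
      using ip_self_diff_le[of d "xs ! (j+1)" "xs ! j"] nxs[of "xs ! (j+1)"] nxs[of "xs ! j"] j by simp
    from near_minimal_residual_edge[where d=d and x=x, OF \<alpha> _ _ \<theta>0 j this] near m0
    show ?thesis unfolding r_def m_def by simp
  qed
  ultimately show ?thesis using \<theta>0 by (intro exI[of _ r] exI[of _ \<theta>]) auto
qed

section \<open>Sorting by the linear functional\<close>

lemma sorted_wrt_unique:
  assumes asym: "\<And>a b. R a b \<Longrightarrow> \<not> R b a"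
  shows "sorted_wrt R xs \<Longrightarrow> sorted_wrt R ys \<Longrightarrow> set xs = set ys \<Longrightarrow> xs = ys"
proof (induction xs arbitrary: ys)
  case (Cons a as)
  then obtain b bs where ys: "ys = b # bs" by (cases ys) auto
  have irr: "\<And>a. \<not> R a a" using asym by blast
  have "a = b"
  proof (rule ccontr)
    assume "a \<noteq> b"
    then have "R a b" "R b a" using Cons.prems ys by (auto simp: set_eq_iff)
    then show False using asym by blast
  qed
  moreover have "a \<notin> set as" "b \<notin> set bs" using Cons.prems irr ys by auto
  ultimately have "set as = set bs" using Cons.prems(3) ys by auto
  then have "as = bs" using Cons.IH Cons.prems ys by simp
  with \<open>a = b\<close> show ?case using ys by simp
qed simp

lemma exists_sorted_wrt_desc:
  fixes f :: "'a \<Rightarrow> real"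
  assumes fin: "finite S" and inj: "inj_on f S"
  obtains xs where "set xs = S" "sorted_wrt (\<lambda>a b. f b < f a) xs"
proof
  define ks where "ks = rev (sorted_list_of_set (f ` S))"
  have setks: "set ks = f ` S" unfolding ks_def using fin by simp
  have "sorted_wrt (\<lambda>a b. b < a) ks"
    unfolding ks_def sorted_wrt_rev using strict_sorted_list_of_set[of "f ` S"] by simp
  moreover have "\<And>k. k \<in> set ks \<Longrightarrow> f (the_inv_into S f k) = k"
    using setks f_the_inv_into_f[OF inj] by auto
  ultimately have "sorted_wrt (\<lambda>a b. f (the_inv_into S f b) < f (the_inv_into S f a)) ks"
    by (metis (no_types, lifting) sorted_wrt_mono_rel)
  then show "sorted_wrt (\<lambda>a b. f b < f a) (map (the_inv_into S f) ks)" unfolding sorted_wrt_map .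
  show "set (map (the_inv_into S f) ks) = S"
    using setks the_inv_into_f_f[OF inj] by force
qed

lemma sorted_desc_eq:
  assumes "set xs = T" "sorted_wrt (\<lambda>a b. ip d u b < ip d u a) xs"
  shows "sorted_desc d u T = xs"
  unfolding sorted_desc_def
proof (rule the_equality)
  fix ys assume "set ys = T \<and> sorted_wrt (\<lambda>a b. ip d u b < ip d u a) ys"
  then show "ys = xs" using sorted_wrt_unique[of "\<lambda>a b. ip d u b < ip d u a" ys xs] assms by auto
qed (use assms in simp)

lemma sorted_wrt_remove_nth:
  assumes "sorted_wrt R L" "k < length L"
  shows "sorted_wrt R (take k L @ drop (Suc k) L)"
proof -
  have "sorted_wrt R (take k L @ L ! k # drop (Suc k) L)"
    using assms by (simp add: id_take_nth_drop[symmetric])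
  then show ?thesis unfolding sorted_wrt_append by simp
qed

lemma sorted_desc_remove_nth:
  assumes sorted: "sorted_wrt (\<lambda>a b. ip d u b < ip d u a) L" and k: "k < length L"
  shows "sorted_desc d u (set L - {L ! k}) = take k L @ drop (Suc k) L"
proof (rule sorted_desc_eq[OF _ sorted_wrt_remove_nth[OF sorted k]])
  have L: "L = take k L @ L ! k # drop (Suc k) L" using k by (simp add: id_take_nth_drop)
  have "distinct L" using sorted by (induction L) auto
  then have "distinct (take k L @ L ! k # drop (Suc k) L)" using L by simp
  then show "set (take k L @ drop (Suc k) L) = set L - {L ! k}" by (subst (3) L) auto
qed

section \<open>Non-derived points\<close>

lemma sum_squares_le_square_sum:
  fixes f :: "'a \<Rightarrow> real"
  assumes "finite A" "\<And>x. x \<in> A \<Longrightarrow> 0 \<le> f x"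
  shows "(\<Sum>x\<in>A. (f x)^2) \<le> (\<Sum>x\<in>A. f x)^2"
  using assms
proof (induction A rule: finite_induct)
  case (insert a A)
  have "0 \<le> f a" "0 \<le> (\<Sum>x\<in>A. f x)" using insert.prems by (auto intro: sum_nonneg)
  then have "(f a)^2 + (\<Sum>x\<in>A. f x)^2 \<le> (f a + (\<Sum>x\<in>A. f x))^2"
    by (simp add: power2_eq_square algebra_simps)
  then show ?case using insert by simp
qed simp

lemma sum_abs_increments_le:
  fixes \<phi> :: "nat \<Rightarrow> real"
  assumes inc: "\<And>j. j < m \<Longrightarrow> \<phi> (Suc j) - \<phi> j \<le> \<theta>" and \<theta>: "0 \<le> \<theta>"
  shows "(\<Sum>j<m. \<bar>\<phi> (Suc j) - \<phi> j\<bar>) \<le> 2 * real m * \<theta> - (\<phi> m - \<phi> 0)"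
proof -
  have "(\<Sum>j<m. \<bar>\<phi> (Suc j) - \<phi> j\<bar>) \<le> (\<Sum>j<m. 2 * \<theta> - (\<phi> (Suc j) - \<phi> j))"
    using inc \<theta> by (intro sum_mono) (fastforce simp: abs_if)
  also have "\<dots> = 2 * real m * \<theta> - (\<phi> m - \<phi> 0)"
    using sum_lessThan_telescope[of \<phi> m] by (simp add: sum_subtractf sum_distrib_left)
  finally show ?thesis .
qed

lemma large_leverage_of_dominant_value:
  assumes dom: "\<epsilon> * sqrt (\<Sum>a<N. (\<eta> a)^2) + (\<Sum>j<i. \<bar>\<Sum>a<N. \<eta> a * v j a\<bar>) < (\<Sum>a<N. \<eta> a * v i a)"
    and \<epsilon>: "0 \<le> \<epsilon>"
  shows "large_leverage N (\<epsilon>^2) v i"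
  unfolding large_leverage_def
proof (intro exI conjI)
  define t where "t = (\<Sum>a<N. \<eta> a * v i a)"
  have nonneg: "0 \<le> \<epsilon> * sqrt (\<Sum>a<N. (\<eta> a)^2)" "0 \<le> (\<Sum>j<i. \<bar>\<Sum>a<N. \<eta> a * v j a\<bar>)"
    using \<epsilon> by (auto intro!: sum_nonneg mult_nonneg_nonneg)
  then have le: "\<epsilon> * sqrt (\<Sum>a<N. (\<eta> a)^2) \<le> t" "(\<Sum>j<i. \<bar>\<Sum>a<N. \<eta> a * v j a\<bar>) \<le> t" "0 < t"
    using dom unfolding t_def by linarith+
  then show "0 < (\<Sum>a<N. \<eta> a * v i a)^2" unfolding t_def by simp
  have "\<epsilon>^2 * (\<Sum>a<N. (\<eta> a)^2) = (\<epsilon> * sqrt (\<Sum>a<N. (\<eta> a)^2))^2"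
    by (simp add: power_mult_distrib sum_nonneg)
  also have "\<dots> \<le> t^2" using le nonneg by (intro power_mono) auto
  finally have "\<epsilon>^2 * (\<Sum>a<N. (\<eta> a)^2) \<le> t^2" .
  moreover have "(\<Sum>j<i. (\<Sum>a<N. \<eta> a * v j a)^2) \<le> (\<Sum>j<i. \<bar>\<Sum>a<N. \<eta> a * v j a\<bar>)^2"
    using sum_squares_le_square_sum[of "{..<i}" "\<lambda>j. \<bar>\<Sum>a<N. \<eta> a * v j a\<bar>"] by simp
  moreover have "\<dots> \<le> t^2" using le nonneg by (intro power_mono) auto
  ultimately show "quad_form N (reg_gram (\<epsilon>^2) v i) \<eta> \<le> 2 * (\<Sum>a<N. \<eta> a * v i a)^2"
    unfolding quad_form_reg_gram t_def by simp
qed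

lemma separating_functional_of_not_derived:
  assumes norms: "\<forall>x\<in>set L. ip d x x \<le> 1"
    and sorted: "sorted_wrt (\<lambda>a b. ip d u b < ip d u a) L" and k: "0 < k" "k < length L"
    and nd: "\<not> derives d u \<epsilon> (set L - {L ! k}) (L ! k)" and \<epsilon>: "0 < \<epsilon>" "\<epsilon> < 1"
  obtains r \<theta> where "0 \<le> \<theta>" and "\<And>j. j < k - 1 \<Longrightarrow> ip d r (L ! Suc j) - ip d r (L ! j) \<le> \<theta>"
    and "\<epsilon> * sqrt (ip d r r) + 2 * real (length L) * \<theta> < ip d r (L ! k) - ip d r (L ! 0)"
proof -
  define xs where "xs = take k L @ drop (Suc k) L"
  have xs_nth: "xs ! j = L ! j" if "j < k" for j using that k by (simp add: xs_def nth_append)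
  have "\<epsilon> < cone_dist d xs (L ! k)"
    using nd sorted_desc_remove_nth[OF sorted k(2)] by (simp add: derives_iff_cone_dist xs_def)
  moreover have "set xs \<subseteq> set L" "xs \<noteq> []"
    using k by (auto simp: xs_def dest: in_set_takeD in_set_dropD)
  ultimately obtain r \<theta> where \<theta>: "0 \<le> \<theta>"
    and edges: "\<forall>j<length xs - 1. ip d r (\<lambda>i. (xs ! (j+1)) i - (xs ! j) i) \<le> \<theta>"
    and top: "\<epsilon> * sqrt (ip d r r) + 2 * real (length L) * \<theta> < ip d r (\<lambda>i. (L ! k) i - (xs ! 0) i)"
    using cone_separation[of \<epsilon> d xs "L ! k" "2 * real (length L)"] \<epsilon> norms k by auto
  show ?thesis
  proof (rule that[OF \<theta>])
    fix j assume j: "j < k - 1"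
    then have "j < length xs - 1" using k by (simp add: xs_def)
    then show "ip d r (L ! Suc j) - ip d r (L ! j) \<le> \<theta>"
      using edges[rule_format, of j] j xs_nth[of j] xs_nth[of "Suc j"] by (simp add: ip_diff_right)
  qed (use top xs_nth[of 0] k in \<open>simp add: ip_diff_right\<close>)
qed

lemma large_leverage_of_not_derived:
  fixes L :: "(nat \<Rightarrow> real) list" and b :: "nat \<Rightarrow> nat \<Rightarrow> real" and d :: nat
  defines "v \<equiv> \<lambda>j a. ip d (\<lambda>i. (L ! Suc j) i - (L ! j) i) (b a)"
  assumes on: "orthonormal d N b" and span: "\<forall>x\<in>set L. inspan N b x"
    and norms: "\<forall>x\<in>set L. ip d x x \<le> 1"
    and sorted: "sorted_wrt (\<lambda>a b. ip d u b < ip d u a) L"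
    and k: "0 < k" "k < length L"
    and nd: "\<not> derives d u \<epsilon> (set L - {L ! k}) (L ! k)" and \<epsilon>: "0 < \<epsilon>" "\<epsilon> < 1"
  shows "large_leverage N (\<epsilon>^2) v (k - 1)"
proof -
  obtain r \<theta> where \<theta>: "0 \<le> \<theta>" and steps: "\<And>j. j < k - 1 \<Longrightarrow> ip d r (L ! Suc j) - ip d r (L ! j) \<le> \<theta>"
    and top: "\<epsilon> * sqrt (ip d r r) + 2 * real (length L) * \<theta> < ip d r (L ! k) - ip d r (L ! 0)"
    using separating_functional_of_not_derived[OF norms sorted k nd \<epsilon>] by blast
  define \<phi> where "\<phi> j = ip d r (L ! j)" for j
  define \<eta> where "\<eta> a = ip d r (b a)" for a
  have \<eta>_v: "(\<Sum>a<N. \<eta> a * v j a) = \<phi> (Suc j) - \<phi> j" if "j < length L - 1" for j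
  proof -
    have "inspan N b (\<lambda>i. (L ! Suc j) i - (L ! j) i)" using span that by (intro inspan_diff) auto
    from ip_eq_sum_coords[OF on this, of r] show ?thesis
      by (simp add: \<eta>_def v_def \<phi>_def ip_diff_right)
  qed
  have "(\<Sum>j<k - 1. \<bar>\<phi> (Suc j) - \<phi> j\<bar>) \<le> 2 * real (k - 1) * \<theta> - (\<phi> (k - 1) - \<phi> 0)"
    using sum_abs_increments_le[of "k - 1" \<phi>, OF _ \<theta>] steps by (simp add: \<phi>_def)
  moreover have "2 * real (k - 1) * \<theta> \<le> 2 * real (length L) * \<theta>" using \<theta> k by (intro mult_right_mono) auto
  moreover have "\<epsilon> * sqrt (\<Sum>a<N. (\<eta> a)^2) \<le> \<epsilon> * sqrt (ip d r r)"
    using bessel_inequality[OF on, of r] \<epsilon> by (simp add: \<eta>_def)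
  moreover have "(\<Sum>j<k - 1. \<bar>\<Sum>a<N. \<eta> a * v j a\<bar>) = (\<Sum>j<k - 1. \<bar>\<phi> (Suc j) - \<phi> j\<bar>)"
    using k by (intro sum.cong) (simp_all add: \<eta>_v)
  moreover have "(\<Sum>a<N. \<eta> a * v (k - 1) a) = \<phi> k - \<phi> (k - 1)" using \<eta>_v[of "k - 1"] k by simp
  ultimately have "\<epsilon> * sqrt (\<Sum>a<N. (\<eta> a)^2) + (\<Sum>j<k - 1. \<bar>\<Sum>a<N. \<eta> a * v j a\<bar>)
      < (\<Sum>a<N. \<eta> a * v (k - 1) a)"
    using top unfolding \<phi>_def by linarith
  from large_leverage_of_dominant_value[OF this] \<epsilon> show ?thesis by simp
qed

lemma derives_of_cone_member:
  assumes "\<forall>j<length (sorted_desc d u T) - 1. 0 \<le> \<alpha> j"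
    and "cone_residual (sorted_desc d u T) x \<alpha> = (\<lambda>i. 0)" and "0 \<le> \<epsilon>"
  shows "derives d u \<epsilon> T x"
  using cone_dist_le[OF assms(1), of d x] assms(2,3)
  by (simp add: derives_iff_cone_dist vnorm_def ip_def)

lemma derives_of_collinear:
  assumes line: "\<forall>y\<in>set L. \<exists>c. y = (\<lambda>i. c * e i)"
    and sorted: "sorted_wrt (\<lambda>a b. ip d u b < ip d u a) L"
    and k: "0 < k" "k < length L" and len: "3 \<le> length L" and \<epsilon>: "0 \<le> \<epsilon>"
  shows "derives d u \<epsilon> (set L - {L ! k}) (L ! k)"
proof -
  define xs where "xs = take k L @ drop (Suc k) L"
  have xs: "sorted_desc d u (set L - {L ! k}) = xs" "sorted_wrt (\<lambda>a b. ip d u b < ip d u a) xs"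
    using sorted_desc_remove_nth[OF sorted k(2)] sorted_wrt_remove_nth[OF sorted k(2)]
    by (simp_all add: xs_def)
  have len_xs: "length xs = length L - 1" and xs0: "xs ! 0 = L ! 0" using k by (simp_all add: xs_def nth_append)
  have "set xs \<subseteq> set L" by (auto simp: xs_def dest: in_set_takeD in_set_dropD)
  then have "xs ! 0 \<in> set L" "xs ! 1 \<in> set L" "L ! k \<in> set L" using len len_xs k by auto
  then obtain c0 c1 cx where c: "xs ! 0 = (\<lambda>i. c0 * e i)" "xs ! 1 = (\<lambda>i. c1 * e i)" "L ! k = (\<lambda>i. cx * e i)"
    using line by meson
  (* both points lie below the first one in the u-order, hence on the same side of it on the line *)
  have "ip d u (L ! k) < ip d u (xs ! 0)"
    using sorted k unfolding xs0 sorted_wrt_iff_nth_less by blast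
  moreover have "ip d u (xs ! 1) < ip d u (xs ! 0)"
    using xs(2) len len_xs unfolding sorted_wrt_iff_nth_less by simp
  ultimately have neg: "(cx - c0) * ip d u e < 0" "(c1 - c0) * ip d u e < 0"
    unfolding c ip_scale_right by (simp_all add: algebra_simps)
  define \<mu> where "\<mu> = (cx - c0) / (c1 - c0)"
  have nonzero: "ip d u e \<noteq> 0" "c1 - c0 \<noteq> 0" using neg by auto
  then have "0 \<le> \<mu>" using divide_neg_neg[OF neg] by (simp add: \<mu>_def)
  moreover have "cone_residual xs (L ! k) (\<lambda>j. if j = 0 then \<mu> else 0) = (\<lambda>i. 0)"
  proof
    fix i
    have "(\<Sum>j<length xs - 1. (if j = 0 then \<mu> else 0) * ((xs ! (j+1)) i - (xs ! j) i))
        = \<mu> * ((xs ! 1) i - (xs ! 0) i)"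
      using len len_xs by (simp add: if_distrib[of "\<lambda>t. t * _"] cong: if_cong)
    then have "cone_residual xs (L ! k) (\<lambda>j. if j = 0 then \<mu> else 0) i
        = (L ! k) i - (xs ! 0) i - \<mu> * ((xs ! 1) i - (xs ! 0) i)"
      by (simp add: cone_residual_def)
    also have "\<dots> = 0" using nonzero(2) unfolding c \<mu>_def by (simp add: field_simps)
    finally show "cone_residual xs (L ! k) (\<lambda>j. if j = 0 then \<mu> else 0) i = 0" .
  qed
  ultimately show ?thesis using \<epsilon> by (intro derives_of_cone_member) (simp_all add: xs)
qed

section \<open>Counting the non-derived points\<close>

lemma ln_le_div_add: "0 < (x::real) \<Longrightarrow> 0 < c \<Longrightarrow> ln x \<le> x / c + ln c - 1"
  using ln_le_minus_one[of "x / c"] by (simp add: ln_div)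

lemma ln_nat_ge_half:
  assumes "2 \<le> N"
  shows "1/2 \<le> ln (real N)"
proof -
  have "1 - 1 / real N \<le> ln (real N)" using ln_le_minus_one[of "1 / real N"] assms by (simp add: ln_div)
  moreover have "1 / real N \<le> 1/2" using assms by (simp add: field_simps)
  ultimately show ?thesis by simp
qed

lemma log_potential_bound:
  fixes \<epsilon> :: real and N n g :: nat
  assumes N: "1 \<le> N" and \<epsilon>: "0 < \<epsilon>" "\<epsilon> < 1" and n: "0 < n"
    and pot: "(\<epsilon>^2)^N * (3/2)^g \<le> (\<epsilon>^2 + real (n - 1) * 4)^N"
  shows "real g * ln (3/2) \<le> real N * (42 + 2 * ln (real N / \<epsilon>)) + real n / 40"
proof -
  have pos: "0 < \<epsilon>^2 + real (n - 1) * 4" using \<epsilon> by (simp add: add_pos_nonneg)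
  have "ln ((\<epsilon>^2)^N * (3/2)^g) \<le> ln ((\<epsilon>^2 + real (n - 1) * 4)^N)"
    using \<epsilon> by (intro ln_mono[OF pot]) simp
  then have log_pot: "real g * ln (3/2) \<le> real N * (ln (\<epsilon>^2 + real (n - 1) * 4) - 2 * ln \<epsilon>)"
    using \<epsilon> pos by (simp add: ln_mult ln_realpow algebra_simps)
  have "\<epsilon>^2 + real (n - 1) * 4 \<le> 5 * real n" using power_le_one[of \<epsilon> 2] \<epsilon> n by simp
  then have "ln (\<epsilon>^2 + real (n - 1) * 4) \<le> ln (5 * real n)" using ln_mono pos by blast
  also have "\<dots> = ln 5 + ln (real N) + ln (real n / real N)"
    using N n by (simp add: ln_mult ln_div)
  also have "\<dots> \<le> 42 + ln (real N) + real n / real N / 40"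
    using ln_le_div_add[of "real n / real N" 40] ln_le_minus_one[of 5] ln_le_minus_one[of 40] N n
    by simp
  finally have "ln (\<epsilon>^2 + real (n - 1) * 4) \<le> 42 + ln (real N) + real n / real N / 40" .
  moreover have "ln (real N / \<epsilon>) = ln (real N) - ln \<epsilon>" "0 \<le> ln (real N)"
    using N \<epsilon> by (simp_all add: ln_div)
  ultimately have "ln (\<epsilon>^2 + real (n - 1) * 4) - 2 * ln \<epsilon> \<le> 42 + 2 * ln (real N / \<epsilon>) + real n / real N / 40"
    by linarith
  from mult_left_mono[OF this, of "real N"] log_pot N
  show ?thesis by (simp add: algebra_simps)
qed

lemma count_le_of_potential:
  fixes \<epsilon> :: real and N n g :: nat
  assumes N: "2 \<le> N" and \<epsilon>: "0 < \<epsilon>" "\<epsilon> < 1"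
    and pot: "(\<epsilon>^2)^N * (3/2)^g \<le> (\<epsilon>^2 + real (n - 1) * 4)^N"
    and big: "4000 * real N * ln (real N / \<epsilon>) \<le> real n"
  shows "1 + real g \<le> real n / 4"
proof -
  define L where "L = ln (real N / \<epsilon>)"
  have "1/2 \<le> ln (real N)" "ln \<epsilon> < 0" "L = ln (real N) - ln \<epsilon>"
    using ln_nat_ge_half[OF N] N \<epsilon> by (auto simp: L_def ln_div)
  then have L: "1/2 \<le> L" by linarith
  have NL: "1 \<le> real N * L" using mult_mono[OF _ L, of 2 "real N"] N by simp
  have n: "0 < n" using big NL unfolding L_def by simp
  have "real g * ln (3/2) \<le> real N * (42 + 2 * L) + real n / 40"
    using log_potential_bound[OF _ \<epsilon> n pot] N unfolding L_def by simp
  also have "\<dots> \<le> 86 * (real N * L) + real n / 40"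
    using mult_left_mono[of 42 "84 * L" "real N"] L by (simp add: algebra_simps)
  finally have "real g / 3 \<le> 86 * (real N * L) + real n / 40"
    using ln_le_minus_one[of "2/3"] mult_left_mono[of "1/3" "ln (3/2)" "real g"] by (simp add: ln_div)
  then show ?thesis using big NL unfolding L_def by simp
qed

lemma not_derived_subset_large_leverage:
  fixes L :: "(nat \<Rightarrow> real) list" and b :: "nat \<Rightarrow> nat \<Rightarrow> real" and d :: nat
  defines "v \<equiv> \<lambda>j a. ip d (\<lambda>i. (L ! Suc j) i - (L ! j) i) (b a)"
  assumes on: "orthonormal d N b" and span: "\<forall>x\<in>set L. inspan N b x"
    and norms: "\<forall>x\<in>set L. ip d x x \<le> 1"
    and sorted: "sorted_wrt (\<lambda>a b. ip d u b < ip d u a) L" and \<epsilon>: "0 < \<epsilon>" "\<epsilon> < 1"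
  shows "{x \<in> set L. \<not> derives d u \<epsilon> (set L - {x}) x}
    \<subseteq> insert (L ! 0) ((\<lambda>i. L ! Suc i) ` {i. i < length L - 1 \<and> large_leverage N (\<epsilon>^2) v i})"
proof
  fix x assume "x \<in> {x \<in> set L. \<not> derives d u \<epsilon> (set L - {x}) x}"
  then obtain k where k: "k < length L" "x = L ! k" and nd: "\<not> derives d u \<epsilon> (set L - {L ! k}) (L ! k)"
    by (auto simp: in_set_conv_nth)
  show "x \<in> insert (L ! 0) ((\<lambda>i. L ! Suc i) ` {i. i < length L - 1 \<and> large_leverage N (\<epsilon>^2) v i})"
  proof (cases k)
    case (Suc i)
    then have "large_leverage N (\<epsilon>^2) v i"
      using large_leverage_of_not_derived[OF on span norms sorted _ k(1) nd \<epsilon>] by (simp add: v_def)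
    then show ?thesis using k Suc by auto
  qed (use k in simp)
qed

lemma not_derived_subset_collinear:
  assumes line: "\<forall>y\<in>set L. \<exists>c. y = (\<lambda>i. c * e i)"
    and sorted: "sorted_wrt (\<lambda>a b. ip d u b < ip d u a) L" and len: "3 \<le> length L" and \<epsilon>: "0 \<le> \<epsilon>"
  shows "{x \<in> set L. \<not> derives d u \<epsilon> (set L - {x}) x} \<subseteq> {L ! 0}"
proof
  fix x assume "x \<in> {x \<in> set L. \<not> derives d u \<epsilon> (set L - {x}) x}"
  then obtain k where k: "k < length L" "x = L ! k" and nd: "\<not> derives d u \<epsilon> (set L - {L ! k}) (L ! k)"
    by (auto simp: in_set_conv_nth)
  then have "k = 0" using derives_of_collinear[OF line sorted _ k(1) len \<epsilon>] by auto
  then show "x \<in> {L ! 0}" using k by simp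
qed

lemma card_large_leverage_le:
  fixes L :: "(nat \<Rightarrow> real) list" and b :: "nat \<Rightarrow> nat \<Rightarrow> real" and d :: nat
  defines "v \<equiv> \<lambda>j a. ip d (\<lambda>i. (L ! Suc j) i - (L ! j) i) (b a)"
  assumes on: "orthonormal d N b" and norms: "\<forall>x\<in>set L. ip d x x \<le> 1"
    and N: "2 \<le> N" and \<epsilon>: "0 < \<epsilon>" "\<epsilon> < 1"
    and big: "4000 * real N * ln (real N / \<epsilon>) \<le> real (length L)"
  shows "1 + real (card {i. i < length L - 1 \<and> large_leverage N (\<epsilon>^2) v i}) \<le> real (length L) / 4"
proof -
  have "(v j a)^2 \<le> 4" if "j < length L - 1" "a < N" for j a
  proof -
    have "(v j a)^2 \<le> (\<Sum>a<N. (v j a)^2)" using that by (intro member_le_sum) auto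
    also have "\<dots> \<le> ip d (\<lambda>i. (L ! Suc j) i - (L ! j) i) (\<lambda>i. (L ! Suc j) i - (L ! j) i)"
      unfolding v_def by (rule bessel_inequality[OF on])
    also have "\<dots> \<le> 4"
      using ip_self_diff_le[of d "L ! Suc j" "L ! j"] norms[rule_format, of "L ! Suc j"]
        norms[rule_format, of "L ! j"] that by simp
    finally show ?thesis .
  qed
  with \<epsilon> have "(\<epsilon>^2)^N * (3/2) ^ card {i. i < length L - 1 \<and> large_leverage N (\<epsilon>^2) v i}
      \<le> (\<epsilon>^2 + real (length L - 1) * 4)^N"
    by (intro elliptical_potential) auto
  then show ?thesis by (rule count_le_of_potential[OF N \<epsilon> _ big])
qed

lemma card_not_derived_le:
  assumes on: "orthonormal d N b" and span: "\<forall>x\<in>set L. inspan N b x"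
    and norms: "\<forall>x\<in>set L. ip d x x \<le> 1"
    and sorted: "sorted_wrt (\<lambda>a b. ip d u b < ip d u a) L" and \<epsilon>: "0 < \<epsilon>" "\<epsilon> < 1"
    and N: "1 \<le> N" and n: "4 \<le> length L" and big: "4000 * real N * ln (real N / \<epsilon>) \<le> real (length L)"
  shows "real (card {x \<in> set L. \<not> derives d u \<epsilon> (set L - {x}) x}) \<le> real (length L) / 4"
proof (cases "N = 1")
  case True
  have "\<exists>c. y = (\<lambda>i. c * b 0 i)" if y: "y \<in> set L" for y
  proof -
    obtain c where "\<forall>i. y i = (\<Sum>j<1. c j * b j i)" using span y True by (auto simp: inspan_def)
    then show ?thesis by (intro exI[of _ "c 0"] ext) simp
  qed
  then have "\<forall>y\<in>set L. \<exists>c. y = (\<lambda>i. c * b 0 i)" by blast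
  from not_derived_subset_collinear[OF this sorted _ less_imp_le[OF \<epsilon>(1)]] n
  have "card {x \<in> set L. \<not> derives d u \<epsilon> (set L - {x}) x} \<le> card {L ! 0}"
    by (intro card_mono) auto
  then show ?thesis using n by simp
next
  case False
  define v where "v = (\<lambda>j a. ip d (\<lambda>i. (L ! Suc j) i - (L ! j) i) (b a))"
  have "card {x \<in> set L. \<not> derives d u \<epsilon> (set L - {x}) x}
      \<le> card (insert (L ! 0) ((\<lambda>i. L ! Suc i) ` {i. i < length L - 1 \<and> large_leverage N (\<epsilon>^2) v i}))"
    using not_derived_subset_large_leverage[OF on span norms sorted \<epsilon>, folded v_def] by (intro card_mono) auto
  also have "\<dots> \<le> Suc (card ((\<lambda>i. L ! Suc i) ` {i. i < length L - 1 \<and> large_leverage N (\<epsilon>^2) v i}))"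
    by (simp add: card_insert_if)
  also have "\<dots> \<le> Suc (card {i. i < length L - 1 \<and> large_leverage N (\<epsilon>^2) v i})"
    by (simp add: card_image_le)
  finally show ?thesis
    using card_large_leverage_le[OF on norms _ \<epsilon> big, folded v_def] N False by simp
qed

lemma card_derived_ge:
  assumes \<epsilon>: "0 < \<epsilon>" "\<epsilon> < 1" and fin: "finite S"
    and unit: "\<forall>x\<in>S. in_Rd d x \<and> vnorm d x \<le> 1" and inj: "inj_on (\<lambda>x. ip d u x) S"
    and N: "1 \<le> intrinsic_dim d S"
    and big: "4 * real_of_int \<lceil>1000 * real (intrinsic_dim d S) * ln (real (intrinsic_dim d S) / \<epsilon>)\<rceil>
      \<le> real (card S)"
  shows "3/4 * real (card S) \<le> real (card {x \<in> S. derives d u \<epsilon> (S - {x}) x})"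
proof -
  define N where "N = intrinsic_dim d S"
  obtain b where on: "orthonormal d N b" and span: "\<forall>x\<in>S. inspan N b x"
    using intrinsic_dim_basis[of S d] unit unfolding N_def by blast
  obtain L where L: "set L = S" and sorted: "sorted_wrt (\<lambda>a b. ip d u b < ip d u a) L"
    using exists_sorted_wrt_desc[OF fin inj] by blast
  have "distinct L" using sorted by (induction L) auto
  then have n: "length L = card S" using L distinct_card by force
  have norms: "\<forall>x\<in>set L. ip d x x \<le> 1"
    using unit L by (auto simp: vnorm_def real_sqrt_le_1_iff)
  have "0 < ln (real N / \<epsilon>)" using N \<epsilon> by (simp add: N_def)
  then have "0 < 1000 * real N * ln (real N / \<epsilon>)" using N by (simp add: N_def)
  then have "1 \<le> \<lceil>1000 * real N * ln (real N / \<epsilon>)\<rceil>" by linarith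
  then have "4 \<le> length L" "4000 * real N * ln (real N / \<epsilon>) \<le> real (length L)"
    using big le_of_int_ceiling[of "1000 * real N * ln (real N / \<epsilon>)"] unfolding n N_def[symmetric]
    by linarith+
  from card_not_derived_le[OF on span[folded L] norms sorted \<epsilon> N[folded N_def] this]
  have bad: "real (card {x \<in> S. \<not> derives d u \<epsilon> (S - {x}) x}) \<le> real (card S) / 4"
    unfolding L n .
  have "{x \<in> S. derives d u \<epsilon> (S - {x}) x} = S - {x \<in> S. \<not> derives d u \<epsilon> (S - {x}) x}" by auto
  then have "card {x \<in> S. derives d u \<epsilon> (S - {x}) x} = card S - card {x \<in> S. \<not> derives d u \<epsilon> (S - {x}) x}"
    using fin by (simp add: card_Diff_subset)
  moreover have "card {x \<in> S. \<not> derives d u \<epsilon> (S - {x}) x} \<le> card S" by (rule card_mono[OF fin]) auto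
  ultimately show ?thesis using bad by (simp add: of_nat_diff)
qed

theorem lemmaA2:
  shows "\<exists>C>0. \<forall>(d::nat) (\<epsilon>::real) (u::nat \<Rightarrow> real) (S::(nat \<Rightarrow> real) set).
     0 < \<epsilon> \<and> \<epsilon> < 1 \<and> in_Rd d u \<and> finite S \<and>
     (\<forall>x\<in>S. in_Rd d x \<and> vnorm d x \<le> 1) \<and>
     inj_on (\<lambda>x. ip d u x) S \<and>
     intrinsic_dim d S \<ge> 1 \<and>
     real (card S) \<ge> 4 * real_of_int \<lceil>C * real (intrinsic_dim d S) * ln (real (intrinsic_dim d S) / \<epsilon>)\<rceil>
     \<longrightarrow> real (card {x\<in>S. derives d u \<epsilon> (S - {x}) x}) \<ge> 3/4 * real (card S)"
proof (intro exI[of _ 1000] conjI allI impI)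
  show "(0::real) < 1000" by simp
qed (use card_derived_ge in blast)

end
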